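(* Let $K$ be a finite simplicial complex with stratification $\mathcal S$ and assignment map $s$, let $(f,s)$ be a discrete stratified Morse function on $K$, and let $V$ be the discrete gradient vector field $V=\bigcup_i V_i$ (defined below). Extend the partial order on $\mathcal S$ (given by $S_i<S_j$ iff $S_i\subseteq\overline{S_j}$) to a linear order and write the strata as $S_1<S_2<\cdots<S_n$. Then there is a discrete Morse function $g:K\to\mathbb R$ such that (1) the gradient vector field of $g$ is exactly $V$, and (2) there are real numbers $a_1<a_2<\cdots<a_n$ with $g^{-1}(-\infty,a_i]=\bigcup_{j\le i}S_j$ (as sets of simplices) for each $1\le i\le n$.
   Context: A finite simplicial complex $K$ is regarded as a finite set of open simplices closed under taking faces; closures are taken in $|K|$. A stratification of $K$ is a finite collection $\mathcal S=\{S_i\}$ of pairwise disjoint, locally closed subsets of $|K|$, each a union of open simplices, covering $|K|$, with $S_i\cap\overline{S_j}\neq\emptyset$ iff $S_i\subseteq\overline{S_j}$; $s:K\to\mathcal S$ sends a simplex to the stratum containing it. For $f:K\to\mathbb R$ and a $p$-simplex $\alpha$: $U(\alpha)=\{\beta^{(p+1)}>\alpha: f(\beta)\le f(\alpha)\}$, $L(\alpha)=\{\gamma^{(p-1)}<\alpha: f(\gamma)\ge f(\alpha)\}$, and $U_s,L_s$ are the subsets consisting of simplices in the same stratum as $\alpha$. $f$ is a discrete Morse function if $|U(\alpha)|\le1,|L(\alpha)|\le1$ for all $\alpha$; $(f,s)$ is a discrete stratified Morse function if $|U_s(\alpha)|\le1$, $|L_s(\alpha)|\le1$ and not both are nonempty,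 for all $\alpha$. $V_i$ is the set of pairs $\{\alpha^{(p)}<\beta^{(p+1)}\}$ with $\alpha,\beta\subseteq S_i$ and $f(\beta)\le f(\alpha)$, and $V=\bigcup_iV_i$. The gradient vector field of a discrete Morse function $g$ is the set of pairs $\{\alpha^{(p)}<\beta^{(p+1)}\}$ with $g(\beta)\le g(\alpha)$. *)

theory Defs
  imports Complex_Main
begin

(* A finite simplicial complex: a finite set of simplices (finite nonempty vertex sets),
   closed under taking nonempty faces.  Each simplex stands for the open simplex. *)
definition simplicial_complex :: "'a set set \<Rightarrow> bool" where
  "simplicial_complex K \<longleftrightarrow> finite K \<and>
     (\<forall>\<sigma>\<in>K. finite \<sigma> \<and> \<sigma> \<noteq> {}) \<and>
     (\<forall>\<sigma>\<in>K. \<forall>\<tau>. \<tau> \<noteq> {} \<longrightarrow> \<tau> \<subseteq> \<sigma> \<longrightarrow> \<tau> \<in> K)"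

definition facet :: "'a set \<Rightarrow> 'a set \<Rightarrow> bool" where
  "facet \<alpha> \<beta> \<longleftrightarrow> \<alpha> \<subset> \<beta> \<and> card \<beta> = card \<alpha> + 1"

(* closure in |K| of a union A of open simplices: union of all faces of its simplices *)
definition cl :: "'a set set \<Rightarrow> 'a set set \<Rightarrow> 'a set set" where
  "cl K A = {\<sigma>\<in>K. \<exists>\<tau>\<in>A. \<sigma> \<subseteq> \<tau>}"

(* a union of open simplices S is locally closed in |K| iff it is open in its closure,
   i.e. iff cl(S) - S is closed, i.e. a subcomplex (closed under faces) *)
definition locally_closed :: "'a set set \<Rightarrow> 'a set set \<Rightarrow> bool" where
  "locally_closed K S \<longleftrightarrow>
     (\<forall>\<sigma>\<in>cl K S - S. \<forall>\<tau>\<in>K. \<tau> \<subseteq> \<sigma> \<longrightarrow> \<tau> \<in> cl K S - S)"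

definition stratification :: "'a set set \<Rightarrow> 'a set set set \<Rightarrow> bool" where
  "stratification K \<S> \<longleftrightarrow> finite \<S> \<and>
     (\<forall>S\<in>\<S>. S \<subseteq> K \<and> locally_closed K S) \<and>
     (\<forall>S\<in>\<S>. \<forall>T\<in>\<S>. S \<noteq> T \<longrightarrow> S \<inter> T = {}) \<and>
     \<Union>\<S> = K \<and>
     (\<forall>S\<in>\<S>. \<forall>T\<in>\<S>. S \<inter> cl K T \<noteq> {} \<longleftrightarrow> S \<subseteq> cl K T)"

definition stratum_of :: "'a set set set \<Rightarrow> 'a set \<Rightarrow> 'a set set" where
  "stratum_of \<S> \<alpha> = (THE S. S \<in> \<S> \<and> \<alpha> \<in> S)"

definition U :: "'a set set \<Rightarrow> ('a set \<Rightarrow> real) \<Rightarrow> 'a set \<Rightarrow> 'a set set" where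
  "U K f \<alpha> = {\<beta>\<in>K. facet \<alpha> \<beta> \<and> f \<beta> \<le> f \<alpha>}"

definition L :: "'a set set \<Rightarrow> ('a set \<Rightarrow> real) \<Rightarrow> 'a set \<Rightarrow> 'a set set" where
  "L K f \<alpha> = {\<gamma>\<in>K. facet \<gamma> \<alpha> \<and> f \<gamma> \<ge> f \<alpha>}"

definition U_s :: "'a set set \<Rightarrow> 'a set set set \<Rightarrow> ('a set \<Rightarrow> real) \<Rightarrow> 'a set \<Rightarrow> 'a set set" where
  "U_s K \<S> f \<alpha> = {\<beta>\<in>U K f \<alpha>. stratum_of \<S> \<beta> = stratum_of \<S> \<alpha>}"

definition L_s :: "'a set set \<Rightarrow> 'a set set set \<Rightarrow> ('a set \<Rightarrow> real) \<Rightarrow> 'a set \<Rightarrow> 'a set set" where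
  "L_s K \<S> f \<alpha> = {\<gamma>\<in>L K f \<alpha>. stratum_of \<S> \<gamma> = stratum_of \<S> \<alpha>}"

definition discrete_Morse :: "'a set set \<Rightarrow> ('a set \<Rightarrow> real) \<Rightarrow> bool" where
  "discrete_Morse K f \<longleftrightarrow> (\<forall>\<alpha>\<in>K. card (U K f \<alpha>) \<le> 1 \<and> card (L K f \<alpha>) \<le> 1)"

definition discrete_stratified_Morse ::
    "'a set set \<Rightarrow> 'a set set set \<Rightarrow> ('a set \<Rightarrow> real) \<Rightarrow> bool" where
  "discrete_stratified_Morse K \<S> f \<longleftrightarrow>
     (\<forall>\<alpha>\<in>K. card (U_s K \<S> f \<alpha>) \<le> 1 \<and> card (L_s K \<S> f \<alpha>) \<le> 1 \<and>
        \<not> (U_s K \<S> f \<alpha> \<noteq> {} \<and> L_s K \<S> f \<alpha> \<noteq> {}))"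

definition strat_gradient ::
    "'a set set \<Rightarrow> 'a set set set \<Rightarrow> ('a set \<Rightarrow> real) \<Rightarrow> ('a set \<times> 'a set) set" where
  "strat_gradient K \<S> f =
     {(\<alpha>, \<beta>). \<exists>S\<in>\<S>. \<alpha> \<in> S \<and> \<beta> \<in> S \<and> facet \<alpha> \<beta> \<and> f \<beta> \<le> f \<alpha>}"

definition gradient :: "'a set set \<Rightarrow> ('a set \<Rightarrow> real) \<Rightarrow> ('a set \<times> 'a set) set" where
  "gradient K g = {(\<alpha>, \<beta>). \<alpha> \<in> K \<and> \<beta> \<in> K \<and> facet \<alpha> \<beta> \<and> g \<beta> \<le> g \<alpha>}"

end

theory Submission
  imports Defs
begin

text \<open>Rank every simplex by the position of its stratum in the linear order and put
  \<open>g = C \<cdot> rank + f\<close>, where \<open>M\<close> bounds \<open>\<bar>f\<bar>\<close> and \<open>C > 2M\<close>. Along a face relation the rank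
  never decreases (frontier condition), so \<open>g\<close> strictly increases across strata and agrees
  with \<open>f\<close> up to a constant inside each stratum: the pairs where \<open>g\<close> fails to increase are
  exactly those of \<open>V\<close>, and the sublevel set of \<open>g\<close> at \<open>C i + M\<close> is the union of the first
  \<open>i\<close> strata.\<close>

lemma stratificationD:
  assumes "stratification K \<S>"
  shows stratification_disjoint: "\<And>S T. S \<in> \<S> \<Longrightarrow> T \<in> \<S> \<Longrightarrow> S \<noteq> T \<Longrightarrow> S \<inter> T = {}"
    and stratification_covers: "\<Union>\<S> = K"
    and stratification_frontier:
      "\<And>S T. S \<in> \<S> \<Longrightarrow> T \<in> \<S> \<Longrightarrow> S \<inter> cl K T \<noteq> {} \<Longrightarrow> S \<subseteq> cl K T"
  using assms unfolding stratification_def by simp_all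

lemma stratum_of_eqI:
  assumes "stratification K \<S>" "T \<in> \<S>" "\<sigma> \<in> T"
  shows "stratum_of \<S> \<sigma> = T"
  unfolding stratum_of_def
proof (rule the_equality)
  show "T \<in> \<S> \<and> \<sigma> \<in> T" using assms(2,3) by blast
  fix T' assume "T' \<in> \<S> \<and> \<sigma> \<in> T'"
  then show "T' = T" using stratification_disjoint[OF assms(1), of T' T] assms(2,3) by blast
qed

lemma stratum_of_mem:
  assumes "stratification K \<S>" "\<sigma> \<in> K"
  shows "stratum_of \<S> \<sigma> \<in> \<S>" "\<sigma> \<in> stratum_of \<S> \<sigma>"
proof -
  obtain T where "T \<in> \<S>" "\<sigma> \<in> T" using stratification_covers[OF assms(1)] assms(2) by blast
  then show "stratum_of \<S> \<sigma> \<in> \<S>" "\<sigma> \<in> stratum_of \<S> \<sigma>"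
    using stratum_of_eqI[OF assms(1)] by auto
qed

lemma same_stratum_iff:
  assumes "stratification K \<S>" "\<alpha> \<in> K" "\<beta> \<in> K"
  shows "(\<exists>T\<in>\<S>. \<alpha> \<in> T \<and> \<beta> \<in> T) \<longleftrightarrow> stratum_of \<S> \<alpha> = stratum_of \<S> \<beta>"
  using stratum_of_eqI[OF assms(1)] stratum_of_mem[OF assms(1)] assms(2,3) by metis

lemma stratum_of_face_subset_closure:
  assumes "stratification K \<S>" "\<alpha> \<in> K" "\<beta> \<in> K" "\<alpha> \<subseteq> \<beta>"
  shows "stratum_of \<S> \<alpha> \<subseteq> cl K (stratum_of \<S> \<beta>)"
proof -
  have "\<alpha> \<in> stratum_of \<S> \<alpha> \<inter> cl K (stratum_of \<S> \<beta>)"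
    using stratum_of_mem[OF assms(1)] assms(2-4) unfolding cl_def by blast
  then show ?thesis
    using stratification_frontier[OF assms(1)] stratum_of_mem(1)[OF assms(1)] assms(2,3) by blast
qed

definition stratum_compatible ::
    "'a set set \<Rightarrow> 'a set set set \<Rightarrow> ('a set \<Rightarrow> real) \<Rightarrow> ('a set \<Rightarrow> real) \<Rightarrow> bool" where
  "stratum_compatible K \<S> f g \<longleftrightarrow> (\<forall>\<alpha>\<in>K. \<forall>\<beta>\<in>K. facet \<alpha> \<beta> \<longrightarrow>
     (g \<beta> \<le> g \<alpha> \<longleftrightarrow> stratum_of \<S> \<alpha> = stratum_of \<S> \<beta> \<and> f \<beta> \<le> f \<alpha>))"

lemma stratum_compatible_U_L:
  assumes "stratum_compatible K \<S> f g" "\<alpha> \<in> K"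
  shows "U K g \<alpha> = U_s K \<S> f \<alpha>" "L K g \<alpha> = L_s K \<S> f \<alpha>"
  using assms unfolding stratum_compatible_def U_def U_s_def L_def L_s_def by auto

lemma discrete_Morse_if_stratum_compatible:
  assumes "discrete_stratified_Morse K \<S> f" "stratum_compatible K \<S> f g"
  shows "discrete_Morse K g"
  using assms(1) stratum_compatible_U_L[OF assms(2)]
  unfolding discrete_Morse_def discrete_stratified_Morse_def by simp

lemma gradient_eq_strat_gradient_if_stratum_compatible:
  assumes "stratification K \<S>" "stratum_compatible K \<S> f g"
  shows "gradient K g = strat_gradient K \<S> f"
proof -
  have "strat_gradient K \<S> f = {(\<alpha>, \<beta>). \<alpha> \<in> K \<and> \<beta> \<in> K \<and>
      stratum_of \<S> \<alpha> = stratum_of \<S> \<beta> \<and> facet \<alpha> \<beta> \<and> f \<beta> \<le> f \<alpha>}"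
    using stratification_covers[OF assms(1)] same_stratum_iff[OF assms(1)]
    unfolding strat_gradient_def by blast
  with assms(2) show ?thesis
    unfolding gradient_def stratum_compatible_def by blast
qed

lemma weighted_le_iff:
  fixes C M :: real and r :: "'b \<Rightarrow> nat"
  assumes "\<bar>f x\<bar> \<le> M" "\<bar>f y\<bar> \<le> M" "2 * M < C" "r x \<le> r y"
  shows "C * real (r y) + f y \<le> C * real (r x) + f x \<longleftrightarrow> r x = r y \<and> f y \<le> f x"
proof (cases "r x = r y")
  case False
  have "C \<ge> 0" using assms(1,3) by linarith
  moreover have "real (r x) + 1 \<le> real (r y)" using False assms(4) by simp
  ultimately have "C * (real (r x) + 1) \<le> C * real (r y)" by (simp add: mult_left_mono)
  with assms(1-3) False show ?thesis by (auto simp: algebra_simps)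
qed simp

lemma weighted_le_level_iff:
  fixes C M :: real and r :: "'b \<Rightarrow> nat"
  assumes "\<bar>f x\<bar> \<le> M" "2 * M < C"
  shows "C * real (r x) + f x \<le> C * real i + M \<longleftrightarrow> r x \<le> i"
proof
  assume "C * real (r x) + f x \<le> C * real i + M"
  then have "C * real (r x) < C * (real i + 1)"
    using assms by (simp add: algebra_simps)
  moreover have "C > 0" using assms by linarith
  ultimately have "real (r x) < real i + 1" by simp
  then show "r x \<le> i" by linarith
next
  assume "r x \<le> i"
  moreover have "C \<ge> 0" using assms by linarith
  ultimately have "C * real (r x) \<le> C * real i" by (simp add: mult_left_mono)
  then show "C * real (r x) + f x \<le> C * real i + M" using assms(1) by simp
qed

definition stratum_index ::
    "(nat \<Rightarrow> 'a set set) \<Rightarrow> nat \<Rightarrow> 'a set set set \<Rightarrow> 'a set \<Rightarrow> nat" where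
  "stratum_index S n \<S> \<sigma> = the_inv_into {1..n} S (stratum_of \<S> \<sigma>)"

lemma stratum_index:
  assumes "stratification K \<S>" "bij_betw S {1..n} \<S>" "\<sigma> \<in> K"
  shows "stratum_index S n \<S> \<sigma> \<in> {1..n}" and "S (stratum_index S n \<S> \<sigma>) = stratum_of \<S> \<sigma>"
proof -
  have inj: "inj_on S {1..n}" and img: "stratum_of \<S> \<sigma> \<in> S ` {1..n}"
    using stratum_of_mem(1)[OF assms(1,3)] assms(2) unfolding bij_betw_def by simp_all
  show "stratum_index S n \<S> \<sigma> \<in> {1..n}"
    unfolding stratum_index_def using the_inv_into_into[OF inj img order_refl] .
  show "S (stratum_index S n \<S> \<sigma>) = stratum_of \<S> \<sigma>"
    unfolding stratum_index_def using f_the_inv_into_f[OF inj img] .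
qed

lemma stratum_index_eq_iff:
  assumes "stratification K \<S>" "bij_betw S {1..n} \<S>" "\<alpha> \<in> K" "\<beta> \<in> K"
  shows "stratum_index S n \<S> \<alpha> = stratum_index S n \<S> \<beta> \<longleftrightarrow> stratum_of \<S> \<alpha> = stratum_of \<S> \<beta>"
  using stratum_index(2)[OF assms(1,2,3)] stratum_index(2)[OF assms(1,2,4)]
  unfolding stratum_index_def by metis

lemma stratum_index_mono:
  assumes "stratification K \<S>" "bij_betw S {1..n} \<S>"
    and "\<forall>i\<in>{1..n}. \<forall>j\<in>{1..n}. S i \<subseteq> cl K (S j) \<longrightarrow> i \<le> j"
    and "\<alpha> \<in> K" "\<beta> \<in> K" "\<alpha> \<subseteq> \<beta>"
  shows "stratum_index S n \<S> \<alpha> \<le> stratum_index S n \<S> \<beta>"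
proof -
  have "S (stratum_index S n \<S> \<alpha>) \<subseteq> cl K (S (stratum_index S n \<S> \<beta>))"
    using stratum_of_face_subset_closure[OF assms(1,4-6)]
    by (simp add: stratum_index(2)[OF assms(1,2)] assms(4,5))
  then show ?thesis
    using assms(3) stratum_index(1)[OF assms(1,2,4)] stratum_index(1)[OF assms(1,2,5)] by blast
qed

lemma sublevel_stratum_index:
  assumes "stratification K \<S>" "bij_betw S {1..n} \<S>" "i \<le> n"
  shows "{\<sigma>\<in>K. stratum_index S n \<S> \<sigma> \<le> i} = (\<Union>j\<in>{1..i}. S j)"
proof (intro set_eqI iffI)
  fix \<sigma> assume "\<sigma> \<in> {\<sigma>\<in>K. stratum_index S n \<S> \<sigma> \<le> i}"
  then have "\<sigma> \<in> K" and le: "stratum_index S n \<S> \<sigma> \<le> i" by blast+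
  note index = stratum_index[OF assms(1,2) \<open>\<sigma> \<in> K\<close>]
  have "\<sigma> \<in> S (stratum_index S n \<S> \<sigma>)"
    unfolding index(2) by (rule stratum_of_mem(2)[OF assms(1) \<open>\<sigma> \<in> K\<close>])
  moreover have "stratum_index S n \<S> \<sigma> \<in> {1..i}" using index(1) le by auto
  ultimately show "\<sigma> \<in> (\<Union>j\<in>{1..i}. S j)" by blast
next
  fix \<sigma> assume "\<sigma> \<in> (\<Union>j\<in>{1..i}. S j)"
  then obtain j where "j \<in> {1..i}" "\<sigma> \<in> S j" by blast
  then have j: "j \<in> {1..n}" "j \<le> i" "\<sigma> \<in> S j" using assms(3) by simp_all
  have "S j \<in> \<S>" using bij_betw_apply[OF assms(2) j(1)] .
  then have "\<sigma> \<in> K" using stratification_covers[OF assms(1)] j(3) by blast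
  moreover have "stratum_of \<S> \<sigma> = S j" by (rule stratum_of_eqI[OF assms(1) \<open>S j \<in> \<S>\<close> j(3)])
  then have "stratum_index S n \<S> \<sigma> = j"
    unfolding stratum_index_def using the_inv_into_f_f[OF bij_betw_imp_inj_on[OF assms(2)] j(1)] by simp
  ultimately show "\<sigma> \<in> {\<sigma>\<in>K. stratum_index S n \<S> \<sigma> \<le> i}" using j(2) by simp
qed

lemma stratum_compatible_weighted:
  fixes C M :: real and r :: "'a set \<Rightarrow> nat"
  assumes mono: "\<And>\<alpha> \<beta>. \<alpha> \<in> K \<Longrightarrow> \<beta> \<in> K \<Longrightarrow> \<alpha> \<subseteq> \<beta> \<Longrightarrow> r \<alpha> \<le> r \<beta>"
    and eq_iff: "\<And>\<alpha> \<beta>. \<alpha> \<in> K \<Longrightarrow> \<beta> \<in> K \<Longrightarrow> r \<alpha> = r \<beta> \<longleftrightarrow> stratum_of \<S> \<alpha> = stratum_of \<S> \<beta>"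
    and bound: "\<And>\<sigma>. \<sigma> \<in> K \<Longrightarrow> \<bar>f \<sigma>\<bar> \<le> M" and "2 * M < C"
  shows "stratum_compatible K \<S> f (\<lambda>\<sigma>. C * real (r \<sigma>) + f \<sigma>)"
  unfolding stratum_compatible_def
proof (intro ballI impI)
  fix \<alpha> \<beta> assume "\<alpha> \<in> K" "\<beta> \<in> K" "facet \<alpha> \<beta>"
  then have "r \<alpha> \<le> r \<beta>" using mono unfolding facet_def by blast
  with bound[OF \<open>\<alpha> \<in> K\<close>] bound[OF \<open>\<beta> \<in> K\<close>] \<open>2 * M < C\<close>
  have "C * real (r \<beta>) + f \<beta> \<le> C * real (r \<alpha>) + f \<alpha> \<longleftrightarrow> r \<alpha> = r \<beta> \<and> f \<beta> \<le> f \<alpha>"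
    by (rule weighted_le_iff)
  then show "C * real (r \<beta>) + f \<beta> \<le> C * real (r \<alpha>) + f \<alpha> \<longleftrightarrow>
      stratum_of \<S> \<alpha> = stratum_of \<S> \<beta> \<and> f \<beta> \<le> f \<alpha>"
    using eq_iff[OF \<open>\<alpha> \<in> K\<close> \<open>\<beta> \<in> K\<close>] by simp
qed

theorem mainTheorem5:
  fixes K :: "'a set set" and \<S> :: "'a set set set" and f :: "'a set \<Rightarrow> real"
    and S :: "nat \<Rightarrow> 'a set set" and n :: nat
  assumes "simplicial_complex K"
    and "stratification K \<S>"
    and "discrete_stratified_Morse K \<S> f"
    and "n = card \<S>"
    and "bij_betw S {1..n} \<S>"
    and "\<forall>i\<in>{1..n}. \<forall>j\<in>{1..n}. S i \<subseteq> cl K (S j) \<longrightarrow> i \<le> j"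
  shows "\<exists>g :: 'a set \<Rightarrow> real. discrete_Morse K g \<and>
           gradient K g = strat_gradient K \<S> f \<and>
           (\<exists>a :: nat \<Rightarrow> real. (\<forall>i\<in>{1..n}. \<forall>j\<in>{1..n}. i < j \<longrightarrow> a i < a j) \<and>
              (\<forall>i\<in>{1..n}. {\<sigma>\<in>K. g \<sigma> \<le> a i} = (\<Union>j\<in>{1..i}. S j)))"
proof -
  define r where "r = stratum_index S n \<S>"
  define M where "M = (\<Sum>\<sigma>\<in>K. \<bar>f \<sigma>\<bar>)"
  define C where "C = 2 * M + 1"
  define g where "g \<sigma> = C * real (r \<sigma>) + f \<sigma>" for \<sigma>
  define a where "a i = C * real i + M" for i :: nat
  have "finite K" using assms(1) by (simp add: simplicial_complex_def)
  then have bound: "\<bar>f \<sigma>\<bar> \<le> M" if "\<sigma> \<in> K" for \<sigma>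
    unfolding M_def using that by (intro member_le_sum) auto
  have "M \<ge> 0" unfolding M_def by (simp add: sum_nonneg)
  then have C: "2 * M < C" "C > 0" unfolding C_def by simp_all
  have compatible: "stratum_compatible K \<S> f g"
    unfolding g_def r_def using stratum_index_mono[OF assms(2,5,6)]
      stratum_index_eq_iff[OF assms(2,5)] bound C(1) by (rule stratum_compatible_weighted)
  have "{\<sigma>\<in>K. g \<sigma> \<le> a i} = (\<Union>j\<in>{1..i}. S j)" if "i \<in> {1..n}" for i
  proof -
    have "{\<sigma>\<in>K. g \<sigma> \<le> a i} = {\<sigma>\<in>K. r \<sigma> \<le> i}"
      unfolding g_def a_def
      using weighted_le_level_iff[where f = f and r = r, OF bound C(1)] by blast
    also have "\<dots> = (\<Union>j\<in>{1..i}. S j)"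
      unfolding r_def using sublevel_stratum_index[OF assms(2,5)] that by simp
    finally show ?thesis .
  qed
  moreover have "\<forall>i\<in>{1..n}. \<forall>j\<in>{1..n}. i < j \<longrightarrow> a i < a j"
    using C(2) unfolding a_def by simp
  ultimately show ?thesis
    using discrete_Morse_if_stratum_compatible[OF assms(3) compatible]
      gradient_eq_strat_gradient_if_stratum_compatible[OF assms(2) compatible]
    by blast
qed

end
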